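(* Let $(M_I,\triangleright)$ be a prefactor system and $\alpha,\beta$ consistent sets in it. The following are equivalent: (1) $\alpha^m=\beta^m$; (2) $a_i\approx b_i$ for all $i\in I$, $a_i\in\alpha\cap M_i$, $b_i\in\beta\cap M_i$; (3) $a_i\approx b_j$ for all $i,j\in I$, $a_i\in\alpha\cap M_i$, $b_j\in\beta\cap M_j$.
   Context: Let $(I,\le)$ be a non-empty directed preordered set. Fix a family $\mathcal F(I)$ of subsets of $I$ such that every member is cofinal in $I$, $\mathcal F(I)$ is closed under supersets and finite intersections, and $\mathcal F(I)$ contains every non-empty upward closed subset of $I$. A system $(M_I,\triangleright)$ consists of sets $M_i$ ($i\in I$, pairwise disjoint) and relations $\triangleright\subseteq M_{i'}\times M_i$ for $i\le i'$, reflexive for $i=i'$. $a_i\approx b_j$ iff there are $i'\ge i,j$ and $c\in M_{i'}$ with $c\triangleright a_i$, $c\triangleright b_j$. A prefactor system is a system with $a_{i'}\approx a_i\iff a_{i'}\triangleright a_i$ for all $i\le i'$. A consistent set is a set $\alpha\subseteq\bigcup_i M_i$ with $a_{i'}\triangleright a_i$ for all $a_{i'}\in\alpha\cap M_{i'}$, $a_i\in\alpha\cap M_i$, $i'\ge i$, and with $\{i\mid\alpha\cap M_i\ne\emptyset\}\in\mathcal F(I)$. For a consistent set $\alpha$, $\alpha^m$ denotes the unique inclusion-maximal consistent set containing $\alpha$. *)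

theory Defs
  imports Main
begin

definition directed_preorder :: "'i set \<Rightarrow> ('i \<Rightarrow> 'i \<Rightarrow> bool) \<Rightarrow> bool" where
  "directed_preorder I le \<longleftrightarrow>
     I \<noteq> {} \<and>
     (\<forall>i\<in>I. le i i) \<and>
     (\<forall>i\<in>I. \<forall>j\<in>I. \<forall>k\<in>I. le i j \<longrightarrow> le j k \<longrightarrow> le i k) \<and>
     (\<forall>i\<in>I. \<forall>j\<in>I. \<exists>k\<in>I. le i k \<and> le j k)"

definition cofinal :: "'i set \<Rightarrow> ('i \<Rightarrow> 'i \<Rightarrow> bool) \<Rightarrow> 'i set \<Rightarrow> bool" where
  "cofinal I le A \<longleftrightarrow> A \<subseteq> I \<and> (\<forall>i\<in>I. \<exists>j\<in>A. le i j)"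

definition upward_closed :: "'i set \<Rightarrow> ('i \<Rightarrow> 'i \<Rightarrow> bool) \<Rightarrow> 'i set \<Rightarrow> bool" where
  "upward_closed I le A \<longleftrightarrow> A \<subseteq> I \<and> (\<forall>i\<in>A. \<forall>j\<in>I. le i j \<longrightarrow> j \<in> A)"

definition admissible_family :: "'i set \<Rightarrow> ('i \<Rightarrow> 'i \<Rightarrow> bool) \<Rightarrow> 'i set set \<Rightarrow> bool" where
  "admissible_family I le F \<longleftrightarrow>
     (\<forall>A\<in>F. cofinal I le A) \<and>
     (\<forall>A\<in>F. \<forall>B. A \<subseteq> B \<and> B \<subseteq> I \<longrightarrow> B \<in> F) \<and>
     (\<forall>A\<in>F. \<forall>B\<in>F. A \<inter> B \<in> F) \<and>
     (\<forall>A. A \<noteq> {} \<and> upward_closed I le A \<longrightarrow> A \<in> F)"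

definition system :: "'i set \<Rightarrow> ('i \<Rightarrow> 'i \<Rightarrow> bool) \<Rightarrow> ('i \<Rightarrow> 'a set) \<Rightarrow> ('a \<Rightarrow> 'a \<Rightarrow> bool) \<Rightarrow> bool" where
  "system I le M tri \<longleftrightarrow>
     (\<forall>i\<in>I. \<forall>j\<in>I. i \<noteq> j \<longrightarrow> M i \<inter> M j = {}) \<and>
     (\<forall>c a. tri c a \<longrightarrow> (\<exists>i\<in>I. \<exists>i'\<in>I. le i i' \<and> c \<in> M i' \<and> a \<in> M i)) \<and>
     (\<forall>i\<in>I. \<forall>a\<in>M i. tri a a)"

definition approx :: "'i set \<Rightarrow> ('i \<Rightarrow> 'i \<Rightarrow> bool) \<Rightarrow> ('i \<Rightarrow> 'a set) \<Rightarrow> ('a \<Rightarrow> 'a \<Rightarrow> bool) \<Rightarrow> 'a \<Rightarrow> 'a \<Rightarrow> bool" where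
  "approx I le M tri a b \<longleftrightarrow>
     (\<exists>i\<in>I. \<exists>j\<in>I. \<exists>i'\<in>I. a \<in> M i \<and> b \<in> M j \<and> le i i' \<and> le j i' \<and>
        (\<exists>c\<in>M i'. tri c a \<and> tri c b))"

definition prefactor_system :: "'i set \<Rightarrow> ('i \<Rightarrow> 'i \<Rightarrow> bool) \<Rightarrow> ('i \<Rightarrow> 'a set) \<Rightarrow> ('a \<Rightarrow> 'a \<Rightarrow> bool) \<Rightarrow> bool" where
  "prefactor_system I le M tri \<longleftrightarrow>
     system I le M tri \<and>
     (\<forall>i\<in>I. \<forall>i'\<in>I. le i i' \<longrightarrow> (\<forall>a'\<in>M i'. \<forall>a\<in>M i. approx I le M tri a' a \<longleftrightarrow> tri a' a))"

definition consistent :: "'i set \<Rightarrow> ('i \<Rightarrow> 'i \<Rightarrow> bool) \<Rightarrow> 'i set set \<Rightarrow> ('i \<Rightarrow> 'a set) \<Rightarrow> ('a \<Rightarrow> 'a \<Rightarrow> bool) \<Rightarrow> 'a set \<Rightarrow> bool" where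
  "consistent I le F M tri \<alpha> \<longleftrightarrow>
     \<alpha> \<subseteq> (\<Union>i\<in>I. M i) \<and>
     (\<forall>i\<in>I. \<forall>i'\<in>I. le i i' \<longrightarrow> (\<forall>a'\<in>\<alpha> \<inter> M i'. \<forall>a\<in>\<alpha> \<inter> M i. tri a' a)) \<and>
     {i\<in>I. \<alpha> \<inter> M i \<noteq> {}} \<in> F"

definition maxcons :: "'i set \<Rightarrow> ('i \<Rightarrow> 'i \<Rightarrow> bool) \<Rightarrow> 'i set set \<Rightarrow> ('i \<Rightarrow> 'a set) \<Rightarrow> ('a \<Rightarrow> 'a \<Rightarrow> bool) \<Rightarrow> 'a set \<Rightarrow> 'a set" where
  "maxcons I le F M tri \<alpha> =
     (THE \<gamma>. consistent I le F M tri \<gamma> \<and> \<alpha> \<subseteq> \<gamma> \<and>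
            (\<forall>\<delta>. consistent I le F M tri \<delta> \<and> \<gamma> \<subseteq> \<delta> \<longrightarrow> \<delta> = \<gamma>))"

end

theory Submission
  imports Defs
begin

text \<open>The maximal consistent set \<alpha>^m is the union of all consistent supersets of \<alpha>: any two
  of them are compatible, because \<alpha> meets arbitrarily high levels and an element of \<alpha> high
  enough dominates both. Hence \<alpha>^m = \<beta>^m exactly when \<alpha> \<union> \<beta> is consistent.
  Levelwise \<open>\<approx>\<close> spreads to all pairs of levels: for a \<in> \<alpha> at level i and b \<in> \<beta> at
  level j choose a level k above both that meets \<alpha> and \<beta>; by the prefactor property an element
  of \<beta> at level k dominates the element of \<alpha> there, hence dominates a, and also b. Between
  comparable levels \<open>\<approx>\<close> is domination, so \<alpha> \<union> \<beta> is then consistent.\<close>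

lemma approx_sym: "approx I le M tri a b \<Longrightarrow> approx I le M tri b a"
  unfolding approx_def by blast

lemma approxI:
  assumes "i \<in> I" "j \<in> I" "k \<in> I" "le i k" "le j k"
    and "a \<in> M i" "b \<in> M j" "c \<in> M k" "tri c a" "tri c b"
  shows "approx I le M tri a b"
  using assms unfolding approx_def by blast

lemma consistentD:
  assumes "consistent I le F M tri \<gamma>" "i \<in> I" "i' \<in> I" "le i i'"
    and "a' \<in> \<gamma> \<inter> M i'" "a \<in> \<gamma> \<inter> M i"
  shows "tri a' a"
  using assms unfolding consistent_def by blast

locale prefactor_context =
  fixes I :: "'i set" and le :: "'i \<Rightarrow> 'i \<Rightarrow> bool" and F :: "'i set set"
    and M :: "'i \<Rightarrow> 'a set" and tri :: "'a \<Rightarrow> 'a \<Rightarrow> bool"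
  assumes directed: "directed_preorder I le"
    and admissible: "admissible_family I le F"
    and prefactor: "prefactor_system I le M tri"
begin

lemma index_refl: "i \<in> I \<Longrightarrow> le i i"
  using directed unfolding directed_preorder_def by blast

lemma index_trans: "\<lbrakk>i \<in> I; j \<in> I; k \<in> I; le i j; le j k\<rbrakk> \<Longrightarrow> le i k"
  using directed unfolding directed_preorder_def by blast

lemma tri_refl: "\<lbrakk>i \<in> I; a \<in> M i\<rbrakk> \<Longrightarrow> tri a a"
  using prefactor unfolding prefactor_system_def system_def by blast

lemma tri_if_approx:
  assumes "i \<in> I" "i' \<in> I" "le i i'" "a' \<in> M i'" "a \<in> M i" "approx I le M tri a' a"
  shows "tri a' a"
  using prefactor assms unfolding prefactor_system_def by blast

lemma tri_if_common_dominator: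
  assumes "i \<in> I" "i' \<in> I" "k \<in> I" "le i i'" "le i' k"
    and "a' \<in> M i'" "a \<in> M i" "c \<in> M k" "tri c a'" "tri c a"
  shows "tri a' a"
proof (rule tri_if_approx)
  show "approx I le M tri a' a"
    using approxI[of i' I i k le a' M a c tri] assms index_trans by blast
qed (use assms in auto)

lemma admissible_Int: "\<lbrakk>A \<in> F; B \<in> F\<rbrakk> \<Longrightarrow> A \<inter> B \<in> F"
  using admissible unfolding admissible_family_def by blast

lemma admissible_superset: "\<lbrakk>A \<in> F; A \<subseteq> B; B \<subseteq> I\<rbrakk> \<Longrightarrow> B \<in> F"
  using admissible unfolding admissible_family_def by blast

lemma admissible_cofinal: "\<lbrakk>A \<in> F; i \<in> I\<rbrakk> \<Longrightarrow> \<exists>k\<in>A. le i k"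
  using admissible by (simp add: admissible_family_def cofinal_def)

lemma consistent_common_level:
  assumes "consistent I le F M tri \<alpha>" "consistent I le F M tri \<beta>" "i \<in> I"
  obtains k where "k \<in> I" "le i k" "\<alpha> \<inter> M k \<noteq> {}" "\<beta> \<inter> M k \<noteq> {}"
proof -
  have "{k\<in>I. \<alpha> \<inter> M k \<noteq> {}} \<inter> {k\<in>I. \<beta> \<inter> M k \<noteq> {}} \<in> F"
    using assms(1,2) admissible_Int unfolding consistent_def by blast
  then show thesis
    using admissible_cofinal assms(3) that by blast
qed

lemma consistent_superset_levels:
  assumes "consistent I le F M tri \<alpha>" "\<alpha> \<subseteq> \<gamma>"
  shows "{i\<in>I. \<gamma> \<inter> M i \<noteq> {}} \<in> F"
proof (rule admissible_superset)
  show "{i\<in>I. \<alpha> \<inter> M i \<noteq> {}} \<in> F"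
    using assms(1) unfolding consistent_def by blast
qed (use assms(2) in auto)

lemma consistent_Union:
  assumes "consistent I le F M tri \<alpha>" "G \<noteq> {}"
    and consistent: "\<And>\<gamma>. \<gamma> \<in> G \<Longrightarrow> consistent I le F M tri \<gamma>"
    and superset: "\<And>\<gamma>. \<gamma> \<in> G \<Longrightarrow> \<alpha> \<subseteq> \<gamma>"
  shows "consistent I le F M tri (\<Union>G)"
proof -
  have carrier: "\<Union>G \<subseteq> (\<Union>i\<in>I. M i)"
    using consistent unfolding consistent_def by fastforce
  have compatible: "tri g d"
    if idx: "i \<in> I" "i' \<in> I" "le i i'" and g: "g \<in> \<Union>G \<inter> M i'" and d: "d \<in> \<Union>G \<inter> M i"
    for i i' g d
  proof -
    obtain \<gamma> \<delta> where \<gamma>: "\<gamma> \<in> G" "g \<in> \<gamma>" and \<delta>: "\<delta> \<in> G" "d \<in> \<delta>"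
      using g d by blast
    obtain k a where k: "k \<in> I" "le i' k" "a \<in> \<alpha> \<inter> M k"
      using consistent_common_level[OF assms(1) assms(1) idx(2)] by blast
    have "le i k"
      using index_trans idx(1,2) k(1) idx(3) k(2) .
    have "tri a g"
      using consistentD[OF consistent[OF \<gamma>(1)] idx(2) k(1,2)] superset[OF \<gamma>(1)] k(3) \<gamma>(2) g
      by blast
    moreover have "tri a d"
      using consistentD[OF consistent[OF \<delta>(1)] idx(1) k(1) \<open>le i k\<close>] superset[OF \<delta>(1)] k(3) \<delta>(2) d
      by blast
    ultimately show ?thesis
      using tri_if_common_dominator[OF idx(1,2) k(1) idx(3) k(2)] g d k(3) by blast
  qed
  have "{i\<in>I. \<Union>G \<inter> M i \<noteq> {}} \<in> F"
    using consistent_superset_levels[OF assms(1)] assms(2) superset by blast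
  with carrier compatible show ?thesis
    unfolding consistent_def by blast
qed

lemma consistent_Union_supersets:
  assumes "consistent I le F M tri \<alpha>"
  shows "consistent I le F M tri (\<Union>{\<gamma>. consistent I le F M tri \<gamma> \<and> \<alpha> \<subseteq> \<gamma>})"
  by (rule consistent_Union[OF assms]) (use assms in auto)

lemma maxcons_eq_Union:
  assumes "consistent I le F M tri \<alpha>"
  shows "maxcons I le F M tri \<alpha> = \<Union>{\<gamma>. consistent I le F M tri \<gamma> \<and> \<alpha> \<subseteq> \<gamma>}"
    (is "_ = ?U")
proof -
  have U: "consistent I le F M tri ?U"
    using consistent_Union_supersets[OF assms] .
  show ?thesis
    unfolding maxcons_def
  proof (rule the_equality)
    show "consistent I le F M tri ?U \<and> \<alpha> \<subseteq> ?U \<and>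
        (\<forall>\<delta>. consistent I le F M tri \<delta> \<and> ?U \<subseteq> \<delta> \<longrightarrow> \<delta> = ?U)"
      using U assms by blast
    show "\<gamma> = ?U"
      if "consistent I le F M tri \<gamma> \<and> \<alpha> \<subseteq> \<gamma> \<and>
        (\<forall>\<delta>. consistent I le F M tri \<delta> \<and> \<gamma> \<subseteq> \<delta> \<longrightarrow> \<delta> = \<gamma>)" for \<gamma>
      using that U by blast
  qed
qed

lemma consistent_maxcons:
  "consistent I le F M tri \<alpha> \<Longrightarrow> consistent I le F M tri (maxcons I le F M tri \<alpha>)"
  by (simp add: maxcons_eq_Union consistent_Union_supersets)

lemma subset_maxcons: "consistent I le F M tri \<alpha> \<Longrightarrow> \<alpha> \<subseteq> maxcons I le F M tri \<alpha>"
  by (auto simp: maxcons_eq_Union)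

lemma maxcons_eq_if_subset:
  assumes \<alpha>: "consistent I le F M tri \<alpha>" and \<gamma>: "consistent I le F M tri \<gamma>" and "\<alpha> \<subseteq> \<gamma>"
  shows "maxcons I le F M tri \<gamma> = maxcons I le F M tri \<alpha>"
proof -
  let ?U = "\<lambda>\<alpha>. \<Union>{\<delta>. consistent I le F M tri \<delta> \<and> \<alpha> \<subseteq> \<delta>}"
  have "?U \<gamma> \<subseteq> ?U \<alpha>"
    using \<open>\<alpha> \<subseteq> \<gamma>\<close> by blast
  moreover have "\<gamma> \<subseteq> ?U \<alpha>"
    using \<gamma> \<open>\<alpha> \<subseteq> \<gamma>\<close> by blast
  then have "?U \<alpha> \<subseteq> ?U \<gamma>"
    using consistent_Union_supersets[OF \<alpha>] by blast
  ultimately show ?thesis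
    by (simp add: maxcons_eq_Union \<alpha> \<gamma>)
qed

lemma consistent_approx_same_level:
  assumes "consistent I le F M tri \<gamma>" "i \<in> I" "a \<in> \<gamma> \<inter> M i" "b \<in> \<gamma> \<inter> M i"
  shows "approx I le M tri a b"
proof -
  have "tri a b"
    using consistentD[OF assms(1,2,2) index_refl[OF assms(2)] assms(3,4)] .
  moreover have "tri a a"
    using tri_refl assms(2,3) by blast
  ultimately show ?thesis
    using approxI[of i I i i le a M b a tri] index_refl assms(2-4) by blast
qed

lemma tri_if_approx_levelwise:
  assumes "consistent I le F M tri \<alpha>"
    and levelwise: "\<forall>i\<in>I. \<forall>a\<in>\<alpha> \<inter> M i. \<forall>b\<in>\<beta> \<inter> M i. approx I le M tri a b"
    and idx: "i \<in> I" "k \<in> I" "le i k"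
    and a: "a \<in> \<alpha> \<inter> M i" and b: "b \<in> \<beta> \<inter> M k" and "\<alpha> \<inter> M k \<noteq> {}"
  shows "tri b a"
proof -
  obtain a' where a': "a' \<in> \<alpha> \<inter> M k"
    using \<open>\<alpha> \<inter> M k \<noteq> {}\<close> by blast
  have "approx I le M tri a' b"
    using levelwise idx(2) a' b by blast
  then have "tri a' b"
    using tri_if_approx[OF idx(2,2) index_refl[OF idx(2)]] a' b by blast
  moreover have "tri a' a"
    using consistentD[OF assms(1) idx a' a] .
  ultimately show ?thesis
    using tri_if_common_dominator[OF idx(1,2,2,3) index_refl[OF idx(2)]] a b a' by blast
qed

lemma approx_all_levels_if_approx_levelwise:
  assumes "consistent I le F M tri \<alpha>" "consistent I le F M tri \<beta>"
    and levelwise: "\<forall>i\<in>I. \<forall>a\<in>\<alpha> \<inter> M i. \<forall>b\<in>\<beta> \<inter> M i. approx I le M tri a b"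
    and idx: "i \<in> I" "j \<in> I" and a: "a \<in> \<alpha> \<inter> M i" and b: "b \<in> \<beta> \<inter> M j"
  shows "approx I le M tri a b"
proof -
  obtain m where m: "m \<in> I" "le i m" "le j m"
    using directed idx unfolding directed_preorder_def by blast
  obtain k b' where k: "k \<in> I" "le m k" "\<alpha> \<inter> M k \<noteq> {}" and b': "b' \<in> \<beta> \<inter> M k"
    using consistent_common_level[OF assms(1,2) m(1)] by blast
  have "le i k" "le j k"
    using index_trans idx m k by blast+
  have "tri b' a"
    using tri_if_approx_levelwise[OF assms(1) levelwise idx(1) k(1) \<open>le i k\<close> a b' k(3)] .
  moreover have "tri b' b"
    using consistentD[OF assms(2) idx(2) k(1) \<open>le j k\<close> b' b] .
  ultimately show ?thesis
    using approxI[of i I j k le a M b b' tri] idx k(1) \<open>le i k\<close> \<open>le j k\<close> a b b' by blast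
qed

lemma consistent_Un_if_approx:
  assumes \<alpha>: "consistent I le F M tri \<alpha>" and \<beta>: "consistent I le F M tri \<beta>"
    and approx: "\<forall>i\<in>I. \<forall>j\<in>I. \<forall>a\<in>\<alpha> \<inter> M i. \<forall>b\<in>\<beta> \<inter> M j. approx I le M tri a b"
  shows "consistent I le F M tri (\<alpha> \<union> \<beta>)"
proof -
  have carrier: "\<alpha> \<union> \<beta> \<subseteq> (\<Union>i\<in>I. M i)"
    using \<alpha> \<beta> unfolding consistent_def by blast
  have compatible: "tri x y"
    if idx: "i \<in> I" "i' \<in> I" "le i i'"
      and x: "x \<in> (\<alpha> \<union> \<beta>) \<inter> M i'" and y: "y \<in> (\<alpha> \<union> \<beta>) \<inter> M i" for i i' x y
  proof -
    consider "x \<in> \<alpha>" "y \<in> \<alpha>" | "x \<in> \<beta>" "y \<in> \<beta>" | "x \<in> \<alpha>" "y \<in> \<beta>" | "x \<in> \<beta>" "y \<in> \<alpha>"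
      using x y by blast
    then show ?thesis
    proof cases
      case 1
      then show ?thesis using consistentD[OF \<alpha> idx] x y by blast
    next
      case 2
      then show ?thesis using consistentD[OF \<beta> idx] x y by blast
    next
      case 3
      then have "approx I le M tri x y"
        using approx idx x y by blast
      then show ?thesis using tri_if_approx[OF idx] x y by blast
    next
      case 4
      then have "approx I le M tri y x"
        using approx idx x y by blast
      then have "approx I le M tri x y"
        by (rule approx_sym)
      then show ?thesis using tri_if_approx[OF idx] x y by blast
    qed
  qed
  have "{i\<in>I. (\<alpha> \<union> \<beta>) \<inter> M i \<noteq> {}} \<in> F"
    using consistent_superset_levels[OF \<alpha>] by blast
  with carrier compatible show ?thesis
    unfolding consistent_def by blast
qed

end

theorem lemma2p10:
  fixes I :: "'i set" and le :: "'i \<Rightarrow> 'i \<Rightarrow> bool" and F :: "'i set set"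
    and M :: "'i \<Rightarrow> 'a set" and tri :: "'a \<Rightarrow> 'a \<Rightarrow> bool" and \<alpha> \<beta> :: "'a set"
  assumes "directed_preorder I le"
    and "admissible_family I le F"
    and "prefactor_system I le M tri"
    and "consistent I le F M tri \<alpha>"
    and "consistent I le F M tri \<beta>"
  shows "(maxcons I le F M tri \<alpha> = maxcons I le F M tri \<beta> \<longleftrightarrow>
            (\<forall>i\<in>I. \<forall>a\<in>\<alpha> \<inter> M i. \<forall>b\<in>\<beta> \<inter> M i. approx I le M tri a b))
       \<and> ((\<forall>i\<in>I. \<forall>a\<in>\<alpha> \<inter> M i. \<forall>b\<in>\<beta> \<inter> M i. approx I le M tri a b) \<longleftrightarrow>
            (\<forall>i\<in>I. \<forall>j\<in>I. \<forall>a\<in>\<alpha> \<inter> M i. \<forall>b\<in>\<beta> \<inter> M j. approx I le M tri a b))"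
proof -
  interpret prefactor_context I le F M tri
    using assms(1-3) by unfold_locales
  let ?levelwise = "\<forall>i\<in>I. \<forall>a\<in>\<alpha> \<inter> M i. \<forall>b\<in>\<beta> \<inter> M i. approx I le M tri a b"
  let ?all = "\<forall>i\<in>I. \<forall>j\<in>I. \<forall>a\<in>\<alpha> \<inter> M i. \<forall>b\<in>\<beta> \<inter> M j. approx I le M tri a b"
  have levelwise_all: "?levelwise \<longleftrightarrow> ?all"
    using approx_all_levels_if_approx_levelwise[OF assms(4,5)] by blast
  have "maxcons I le F M tri \<alpha> = maxcons I le F M tri \<beta> \<Longrightarrow> ?levelwise"
    using consistent_approx_same_level[OF consistent_maxcons[OF assms(4)]]
      subset_maxcons[OF assms(4)] subset_maxcons[OF assms(5)] by blast
  moreover have "maxcons I le F M tri \<alpha> = maxcons I le F M tri \<beta>" if ?all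
  proof -
    have "consistent I le F M tri (\<alpha> \<union> \<beta>)"
      using consistent_Un_if_approx[OF assms(4,5) that] .
    then show ?thesis
      using maxcons_eq_if_subset assms(4,5) by (metis Un_upper1 Un_upper2)
  qed
  ultimately show ?thesis
    using levelwise_all by blast
qed

end
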